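(* Let $\omega\ge1$ and $n>2$ be integers, $r=2^\omega$, $R=2^{\omega n}$, and assume $n<r$. Let $p$ be a positive integer with $p<R$, let $r^{-1}$ be a positive integer with $rr^{-1}\equiv1\pmod p$, and set $p'=(rr^{-1}-1)/p$ (an integer). Let $T$ be an integer with $0\le T<pR$, and for $1\le i\le 2n$ let $T_i=\lfloor T/r^{i-1}\rfloor\bmod r$. For $1\le i\le n-2$ let $M_i\in\{0,\dots,p-1\}$ satisfy $M_i\equiv (r^{-1})^{\,n-i-1}\pmod p$, and let $H_i=M_iT_i$. Define $$T^{(n-2)}=\lfloor T/r^{n-2}\rfloor+\sum_{i=1}^{n-2}H_i,$$ and for $i=n-1,n$ define $Q_i=(T^{(i-1)}p')\bmod r$ and $T^{(i)}=(T^{(i-1)}+Q_ip)/r$. Let $U=T^{(n)}$; if $U\ge p$ replace $U$ by $U-p$; then again, if $U\ge p$ replace $U$ by $U-p$. Then all $T^{(i)}$ are integers and the final value satisfies $U=TR^{-1}\bmod p$, where $R^{-1}$ denotes an inverse of $R$ modulo $p$.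
   Context: Here $x\bmod m$ denotes the least nonnegative residue. The congruence $M_i\equiv r^{-n+i+1}\pmod p$ in the paper is interpreted with $r^{-1}$ the inverse of $r$ modulo $p$. The quantity $TR^{-1}\bmod p$ is the Montgomery reduction of $T$. *)

theory Defs
  imports "HOL-Number_Theory.Number_Theory"
begin

end

theory Submission
  imports Defs
begin

(* Writing T = r^k (T div r^k) + sum T_i r^(i-1) in base r and multiplying the low digits by
   M_i = r^-(k-i+1) (mod p) gives T' with r^k T' = T (mod p): the first k = n - 2 Montgomery
   divisions by r are traded for precomputed products.  Two REDC steps (X + (X p' mod r) p) / r,
   exact because p p' = -1 (mod r), divide by r twice more modulo p, so r^n times the result
   is T (mod p).  The size bounds T' < 2 p r^2 (this is where n < r enters), then < 2 p r + p,
   then < 3 p, show that two conditional subtractions of p produce the least residue. *)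

lemma int_div_less_of_less_mult:
  fixes a b c :: int
  assumes "0 < b" and "a < c * b"
  shows "a div b < c"
proof -
  have "a div b * b \<le> a"
    using assms(1) by (simp add: minus_mod_eq_div_mult [symmetric])
  then show ?thesis
    using assms by (meson le_less_trans mult_less_cancel_right_pos)
qed

lemma int_digit_expansion:
  fixes T r :: int
  assumes "r > 0"
  shows "T = r ^ k * (T div r ^ k) + (\<Sum>i = 1..k. (T div r ^ (i - 1)) mod r * r ^ (i - 1))"
proof (induction k)
  case 0
  then show ?case by simp
next
  case (Suc k)
  have "T div r ^ Suc k = T div r ^ k div r"
    unfolding power_Suc2 using assms by (intro zdiv_zmult2_eq) simp
  then have "r ^ k * (T div r ^ k) = r ^ k * (r * (T div r ^ Suc k) + (T div r ^ k) mod r)"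
    by simp
  with Suc.IH show ?case
    by (simp add: algebra_simps)
qed

lemma power_mult_inverse_power_cong:
  fixes r rinv m p :: int
  assumes "[r * rinv = 1] (mod p)" and "[m = rinv ^ (k - j)] (mod p)" and "j \<le> k"
  shows "[r ^ k * m = r ^ j] (mod p)"
proof -
  have "[r ^ k * m = r ^ k * rinv ^ (k - j)] (mod p)"
    using assms(2) by (rule cong_scalar_left)
  also have "r ^ k * rinv ^ (k - j) = r ^ j * (r * rinv) ^ (k - j)"
    using assms(3) by (simp add: power_mult_distrib flip: power_add)
  also have "[r ^ j * (r * rinv) ^ (k - j) = r ^ j * 1 ^ (k - j)] (mod p)"
    using assms(1) by (intro cong_mult cong_refl cong_pow)
  finally show ?thesis by simp
qed

definition folded_digits :: "int \<Rightarrow> nat \<Rightarrow> (nat \<Rightarrow> int) \<Rightarrow> int \<Rightarrow> int" where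
  "folded_digits r k M T = T div r ^ k + (\<Sum>i = 1..k. M i * ((T div r ^ (i - 1)) mod r))"

lemma folded_digits_cong:
  fixes r p T :: int and M :: "nat \<Rightarrow> int"
  assumes "r > 0" and "\<forall>i\<in>{1..k}. [r ^ k * M i = r ^ (i - 1)] (mod p)"
  shows "[r ^ k * folded_digits r k M T = T] (mod p)"
proof -
  have "r ^ k * folded_digits r k M T
      = r ^ k * (T div r ^ k) + (\<Sum>i = 1..k. (r ^ k * M i) * ((T div r ^ (i - 1)) mod r))"
    by (simp add: folded_digits_def algebra_simps sum_distrib_left)
  also have "[\<dots> = r ^ k * (T div r ^ k) + (\<Sum>i = 1..k. r ^ (i - 1) * ((T div r ^ (i - 1)) mod r))] (mod p)"
    using assms(2) by (intro cong_add cong_refl cong_sum cong_scalar_right) auto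
  also have "r ^ k * (T div r ^ k) + (\<Sum>i = 1..k. r ^ (i - 1) * ((T div r ^ (i - 1)) mod r)) = T"
    using int_digit_expansion[OF assms(1), of T k] by (simp add: mult.commute)
  finally show ?thesis .
qed

lemma folded_digits_bounds:
  fixes r p T :: int and M :: "nat \<Rightarrow> int"
  assumes "r > 0" and "p > 0" and "0 \<le> T" and "T < p * r ^ (k + 2)" and "int k \<le> r"
    and "\<forall>i\<in>{1..k}. 0 \<le> M i \<and> M i < p"
  shows "0 \<le> folded_digits r k M T" and "folded_digits r k M T < 2 * p * r ^ 2"
proof -
  have digit: "0 \<le> (T div r ^ (i - 1)) mod r" "(T div r ^ (i - 1)) mod r < r" for i
    using assms(1) by simp_all
  have term_bounds: "0 \<le> M i * ((T div r ^ (i - 1)) mod r)" "M i * ((T div r ^ (i - 1)) mod r) \<le> p * r"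
    if "i \<in> {1..k}" for i
  proof -
    have "0 \<le> M i" "M i \<le> p"
      using assms(6) that by (auto simp: less_imp_le)
    then show "0 \<le> M i * ((T div r ^ (i - 1)) mod r)" "M i * ((T div r ^ (i - 1)) mod r) \<le> p * r"
      using digit[of i] by (simp_all add: mult_mono)
  qed
  have "T div r ^ k < p * r ^ 2"
    using assms(1,4) by (intro int_div_less_of_less_mult) (simp_all add: power_add power2_eq_square algebra_simps)
  moreover have "(\<Sum>i = 1..k. M i * ((T div r ^ (i - 1)) mod r)) \<le> int k * (p * r)"
    using sum_bounded_above[of "{1..k}", OF term_bounds(2)] by simp
  moreover have "int k * (p * r) \<le> r * (p * r)"
    using assms(1,2,5) by (intro mult_right_mono) simp_all
  ultimately show "folded_digits r k M T < 2 * p * r ^ 2"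
    unfolding folded_digits_def by (simp add: power2_eq_square algebra_simps)
  show "0 \<le> folded_digits r k M T"
    unfolding folded_digits_def using assms(1,3) term_bounds(1)
    by (intro add_nonneg_nonneg sum_nonneg) (auto simp: pos_imp_zdiv_nonneg_iff)
qed

definition redc :: "int \<Rightarrow> int \<Rightarrow> int \<Rightarrow> int \<Rightarrow> int" where
  "redc r p p' X = (X + (X * p') mod r * p) div r"

lemma redc_dvd:
  fixes r p p' X :: int
  assumes "[p * p' = -1] (mod r)"
  shows "r dvd X + (X * p') mod r * p"
proof -
  have "[X + (X * p') mod r * p = X + X * p' * p] (mod r)"
    by (intro cong_add cong_refl cong_scalar_right) (simp add: cong_def)
  also have "X + X * p' * p = X + X * (p * p')"
    by (simp add: algebra_simps)
  also have "[X + X * (p * p') = X + X * -1] (mod r)"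
    using assms by (intro cong_add cong_mult cong_refl)
  finally show ?thesis by (simp add: cong_0_iff)
qed

lemma redc_cong:
  fixes r p p' X :: int
  assumes "[p * p' = -1] (mod r)"
  shows "[r * redc r p p' X = X] (mod p)"
proof -
  have "r * redc r p p' X = X + (X * p') mod r * p"
    unfolding redc_def using redc_dvd[OF assms] by simp
  then show ?thesis by (simp add: cong_iff_dvd_diff)
qed

lemma redc_nonneg:
  fixes r p p' X :: int
  assumes "r > 0" and "0 \<le> p" and "0 \<le> X"
  shows "0 \<le> redc r p p' X"
  unfolding redc_def using assms by (simp add: pos_imp_zdiv_nonneg_iff)

lemma redc_less:
  fixes r p p' X b :: int
  assumes "r > 0" and "0 \<le> p" and "X < r * b + p"
  shows "redc r p p' X < b + p"
proof -
  have "(X * p') mod r * p \<le> (r - 1) * p"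
    using assms(1,2) by (intro mult_right_mono) simp_all
  then have "X + (X * p') mod r * p < r * (b + p)"
    using assms(3) by (simp add: algebra_simps)
  then show ?thesis
    unfolding redc_def using assms(1) by (intro int_div_less_of_less_mult) (simp_all add: mult.commute)
qed

definition subtract_if_ge :: "int \<Rightarrow> int \<Rightarrow> int" where
  "subtract_if_ge p x = (if p \<le> x then x - p else x)"

lemma subtract_if_ge_twice_eq_mod:
  fixes p x :: int
  assumes "0 \<le> x" and "x < 3 * p"
  shows "subtract_if_ge p (subtract_if_ge p x) = x mod p"
proof -
  consider "x < p" | "p \<le> x" "x < 2 * p" | "2 * p \<le> x"
    by linarith
  then show ?thesis
  proof cases
    case 1
    then show ?thesis using assms by (simp add: subtract_if_ge_def)
  next
    case 2
    then have "x mod p = x - p"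
      using mod_pos_pos_trivial[of "x - p" p] by (simp add: mod_diff_right_eq)
    with 2 show ?thesis by (simp add: subtract_if_ge_def)
  next
    case 3
    have "x mod p = (x - 2 * p + 2 * p) mod p"
      by simp
    also have "\<dots> = x - 2 * p"
      unfolding mod_mult_self1 using 3 assms by simp
    finally have "x mod p = x - 2 * p" .
    with 3 assms show ?thesis by (simp add: subtract_if_ge_def)
  qed
qed

lemma redc_twice_subtract_if_ge:
  fixes r p p' X :: int
  assumes "[p * p' = -1] (mod r)" and "r > 0" and "p > 0" and "0 \<le> X" and "X < 2 * p * r ^ 2"
  defines "U \<equiv> subtract_if_ge p (subtract_if_ge p (redc r p p' (redc r p p' X)))"
  shows "[r ^ 2 * U = X] (mod p)" and "0 \<le> U" and "U < p"
proof -
  define Y where "Y = redc r p p' X"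
  define Z where "Z = redc r p p' Y"
  have "Y < 2 * p * r + p"
    unfolding Y_def using assms(2,3,5) by (intro redc_less) (simp_all add: power2_eq_square algebra_simps)
  then have Y: "0 \<le> Y" "Y < r * (2 * p) + p"
    unfolding Y_def using assms(2-4) by (simp_all add: redc_nonneg mult.commute)
  have "Z < 2 * p + p"
    unfolding Z_def using assms(2,3) Y(2) by (intro redc_less) simp_all
  moreover have "0 \<le> Z"
    unfolding Z_def using assms(2,3) Y(1) by (simp add: redc_nonneg)
  ultimately have U: "U = Z mod p"
    unfolding U_def Y_def Z_def by (simp add: subtract_if_ge_twice_eq_mod)
  then show "0 \<le> U" "U < p"
    using assms(3) by simp_all
  have "[r ^ 2 * Z = r * Y] (mod p)"
    using redc_cong[OF assms(1), of Y] unfolding Z_def power2_eq_square mult.assoc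
    by (intro cong_scalar_left)
  also have "[r * Y = X] (mod p)"
    using redc_cong[OF assms(1)] unfolding Y_def .
  finally have "[r ^ 2 * Z = X] (mod p)" .
  moreover have "[r ^ 2 * U = r ^ 2 * Z] (mod p)"
    unfolding U by (intro cong_scalar_left) (simp add: cong_def)
  ultimately show "[r ^ 2 * U = X] (mod p)"
    by (rule cong_trans[rotated])
qed

lemma eq_mod_of_cong_mult_inverse:
  fixes R Rinv U X p :: int
  assumes "[R * U = X] (mod p)" and "[R * Rinv = 1] (mod p)" and "0 \<le> U" and "U < p"
  shows "U = (X * Rinv) mod p"
proof -
  have "[U = (R * Rinv) * U] (mod p)"
    using assms(2) by (metis cong_scalar_right cong_sym mult_1)
  also have "(R * Rinv) * U = (R * U) * Rinv"
    by (simp add: algebra_simps)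
  also have "[\<dots> = X * Rinv] (mod p)"
    using assms(1) by (rule cong_scalar_right)
  finally show ?thesis
    using assms(3,4) by (simp add: cong_def)
qed

lemma montgomery_constant_cong:
  fixes r rinv p :: int
  assumes "[r * rinv = 1] (mod p)"
  shows "[p * ((r * rinv - 1) div p) = -1] (mod r)"
proof -
  have "p dvd r * rinv - 1"
    using assms by (simp add: cong_iff_dvd_diff)
  then have "p * ((r * rinv - 1) div p) + 1 = r * rinv"
    by simp
  then show ?thesis
    by (simp add: cong_iff_dvd_diff)
qed

lemma folded_montgomery_reduction:
  fixes r p rinv Rinv T :: int and M :: "nat \<Rightarrow> int"
  assumes "r > 0" and "p > 0" and "[r * rinv = 1] (mod p)" and "int k \<le> r"
    and "0 \<le> T" and "T < p * r ^ (k + 2)"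
    and "\<forall>i\<in>{1..k}. 0 \<le> M i \<and> M i < p \<and> [M i = rinv ^ (k - (i - 1))] (mod p)"
    and "[r ^ (k + 2) * Rinv = 1] (mod p)"
  defines "p' \<equiv> (r * rinv - 1) div p" and "T' \<equiv> folded_digits r k M T"
  shows "subtract_if_ge p (subtract_if_ge p (redc r p p' (redc r p p' T'))) = (T * Rinv) mod p"
    (is "?U = _")
proof -
  have "[r ^ k * M i = r ^ (i - 1)] (mod p)" if "i \<in> {1..k}" for i
    using assms(3,7) that by (intro power_mult_inverse_power_cong) auto
  then have T': "[r ^ k * T' = T] (mod p)"
    unfolding T'_def using assms(1) by (intro folded_digits_cong) auto
  have "0 \<le> T'" "T' < 2 * p * r ^ 2"
    unfolding T'_def using folded_digits_bounds assms(1,2,4-7) by blast+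
  then have U: "[r ^ 2 * ?U = T'] (mod p)" "0 \<le> ?U" "?U < p"
    unfolding p'_def using redc_twice_subtract_if_ge montgomery_constant_cong assms(1-3) by blast+
  have "r ^ (k + 2) * ?U = r ^ k * (r ^ 2 * ?U)"
    by (simp only: power_add mult.assoc)
  also have "[r ^ k * (r ^ 2 * ?U) = r ^ k * T'] (mod p)"
    using U(1) by (rule cong_scalar_left)
  also note T'
  finally show ?thesis
    using assms(8) U(2,3) by (rule eq_mod_of_cong_mult_inverse)
qed

theorem theorem2:
  fixes \<omega> n :: nat and p rinv Rinv T :: int and M :: "nat \<Rightarrow> int"
  assumes "\<omega> \<ge> 1" and "n > 2" and "int n < (2::int) ^ \<omega>"
    and "0 < p" and "p < (2::int) ^ (\<omega> * n)"
    and "0 < rinv" and "[(2::int) ^ \<omega> * rinv = 1] (mod p)"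
    and "0 \<le> T" and "T < p * (2::int) ^ (\<omega> * n)"
    and "\<forall>i\<in>{1..n-2}. 0 \<le> M i \<and> M i < p \<and> [M i = rinv ^ (n - i - 1)] (mod p)"
    and "[(2::int) ^ (\<omega> * n) * Rinv = 1] (mod p)"
  shows "let r = (2::int) ^ \<omega>;
             p' = (r * rinv - 1) div p;
             Tb = (\<lambda>i::nat. (T div r ^ (i - 1)) mod r);
             H = (\<lambda>i::nat. M i * Tb i);
             T0 = T div r ^ (n - 2) + (\<Sum>i = 1..n-2. H i);
             Q1 = (T0 * p') mod r;
             T1 = (T0 + Q1 * p) div r;
             Q2 = (T1 * p') mod r;
             T2 = (T1 + Q2 * p) div r;
             U1 = (if T2 \<ge> p then T2 - p else T2);
             U2 = (if U1 \<ge> p then U1 - p else U1)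
         in r dvd (T0 + Q1 * p) \<and> r dvd (T1 + Q2 * p) \<and> U2 = (T * Rinv) mod p"
proof -
  define r where "r = (2::int) ^ \<omega>"
  have "r > 0" and "int (n - 2) \<le> r"
    using assms(3) by (simp_all add: r_def)
  have "n - 2 + 2 = n"
    using assms(2) by simp
  then have R: "r ^ (n - 2 + 2) = 2 ^ (\<omega> * n)"
    by (simp add: r_def power_mult)
  have "\<forall>i\<in>{1..n-2}. 0 \<le> M i \<and> M i < p \<and> [M i = rinv ^ (n - 2 - (i - 1))] (mod p)"
    using assms(10) by (auto simp: Suc_diff_Suc numeral_2_eq_2)
  then have "subtract_if_ge p (subtract_if_ge p (redc r p ((r * rinv - 1) div p)
      (redc r p ((r * rinv - 1) div p) (folded_digits r (n - 2) M T)))) = (T * Rinv) mod p"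
    using assms(4,7-9,11) R \<open>r > 0\<close> \<open>int (n - 2) \<le> r\<close>
    by (intro folded_montgomery_reduction) (simp_all add: r_def)
  moreover have "[p * ((r * rinv - 1) div p) = -1] (mod r)"
    using assms(7) by (simp add: r_def montgomery_constant_cong)
  ultimately show ?thesis
    unfolding Let_def r_def [symmetric] redc_def [symmetric] subtract_if_ge_def [symmetric]
    using redc_dvd by (simp add: folded_digits_def)
qed

end
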